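(* Let $\mathcal{H}$ be a complex Hilbert space and $x,y,e\in\mathcal{H}$ with $\|e\|=1$. Then for every $0\le\alpha\le1$, $$|\langle x,e\rangle\langle e,y\rangle|^2\le \frac{1+\alpha}{4}\|x\|^2\|y\|^2+\frac{1-\alpha}{4}|\langle x,y\rangle|^2+\frac12\|x\|\,\|y\|\,|\langle x,y\rangle|.$$
   Context: $\langle\cdot,\cdot\rangle$ is the inner product of $\mathcal{H}$ and $\|\cdot\|$ the induced norm. *)

theory Defs
  imports "HOL-Analysis.Analysis"
begin

text \<open>Convention: the inner product is linear in the first
argument and conjugate-linear in the second; the norm is induced by it.\<close>

class complex_inner = real_normed_vector +
  fixes scaleC :: "complex \<Rightarrow> 'a \<Rightarrow> 'a"  (infixr \<open>*\<^sub>C\<close> 75)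
    and cinner :: "'a \<Rightarrow> 'a \<Rightarrow> complex"
  assumes scaleC_add_right: "a *\<^sub>C (x + y) = a *\<^sub>C x + a *\<^sub>C y"
    and scaleC_add_left: "(a + b) *\<^sub>C x = a *\<^sub>C x + b *\<^sub>C x"
    and scaleC_scaleC: "a *\<^sub>C (b *\<^sub>C x) = (a * b) *\<^sub>C x"
    and scaleC_one: "1 *\<^sub>C x = x"
    and scaleR_scaleC: "r *\<^sub>R x = complex_of_real r *\<^sub>C x"
    and cinner_commute: "cinner x y = cnj (cinner y x)"
    and cinner_add_left: "cinner (x + y) z = cinner x z + cinner y z"
    and cinner_scaleC_left: "cinner (a *\<^sub>C x) y = a * cinner x y"
    and cinner_self_Im: "Im (cinner x x) = 0"
    and cinner_self_Re_nonneg: "0 \<le> Re (cinner x x)"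
    and cinner_self_eq_zero: "cinner x x = 0 \<longleftrightarrow> x = 0"
    and norm_eq_sqrt_cinner: "norm x = sqrt (Re (cinner x x))"

class chilbert_space = complex_inner + complete_space

end

theory Submission
  imports Defs
begin

text \<open>Buzano's inequality \<open>2 |\<langle>x,e\<rangle>\<langle>e,y\<rangle>| \<le> \<parallel>x\<parallel> \<parallel>y\<parallel> + |\<langle>x,y\<rangle>|\<close> is Cauchy-Schwarz
applied to \<open>x\<close> and the reflection \<open>2\<langle>y,e\<rangle>e - y\<close> of \<open>y\<close> in the line through \<open>e\<close>.
Squaring it gives the case \<open>\<alpha> = 0\<close>; the general case follows since increasing \<open>\<alpha>\<close>
adds \<open>\<alpha>/4 (\<parallel>x\<parallel>\<^sup>2\<parallel>y\<parallel>\<^sup>2 - |\<langle>x,y\<rangle>|\<^sup>2)\<close>, which is nonnegative by Cauchy-Schwarz.\<close>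

lemma cinner_add_right: "cinner x (y + z) = cinner x y + cinner (x::'a::complex_inner) z"
  by (metis cinner_commute cinner_add_left complex_cnj_add)

lemma cinner_scaleC_right: "cinner x (a *\<^sub>C y) = cnj a * cinner (x::'a::complex_inner) y"
  by (metis cinner_commute cinner_scaleC_left complex_cnj_mult)

lemma cinner_minus_left: "cinner (- x) y = - cinner (x::'a::complex_inner) y"
proof -
  have "- x = complex_of_real (-1) *\<^sub>C x"
    by (metis scaleR_scaleC scaleR_minus1_left)
  then show ?thesis
    by (simp add: cinner_scaleC_left)
qed

lemma cinner_minus_right: "cinner x (- y) = - cinner (x::'a::complex_inner) y"
  by (metis cinner_commute cinner_minus_left complex_cnj_minus)

lemma cinner_diff_left: "cinner (x - y) z = cinner x z - cinner (y::'a::complex_inner) z"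
  using cinner_add_left[of x "- y" z] cinner_minus_left[of y z] by simp

lemma cinner_diff_right: "cinner x (y - z) = cinner x y - cinner (x::'a::complex_inner) z"
  using cinner_add_right[of x y "- z"] cinner_minus_right[of x z] by simp

lemma cinner_zero_right: "cinner x 0 = (0::complex)"
  by (metis add.right_neutral add_left_cancel cinner_add_right)

lemma cinner_self_eq_norm_square: "cinner x x = complex_of_real ((norm (x::'a::complex_inner))\<^sup>2)"
proof -
  have "(norm x)\<^sup>2 = Re (cinner x x)"
    using norm_eq_sqrt_cinner[of x] cinner_self_Re_nonneg[of x] by simp
  then show ?thesis
    using cinner_self_Im by (simp add: complex_eq_iff)
qed

lemma norm_cinner_le: "cmod (cinner x y) \<le> norm x * norm (y::'a::complex_inner)"
proof (cases "y = 0")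
  case True
  then show ?thesis
    by (simp add: cinner_zero_right)
next
  case False
  define c where "c = cinner x y"
  define r where "r = (norm y)\<^sup>2"
  define k where "k = c / complex_of_real r"
  have r_pos: "r > 0"
    using False by (simp add: r_def)
  have c_cnj: "c * cnj c = complex_of_real ((cmod c)\<^sup>2)"
    using complex_norm_square[of c] by simp
  have "cinner (x - k *\<^sub>C y) (x - k *\<^sub>C y)
      = cinner x x - cnj k * c - k * cnj c + k * cnj k * cinner y y"
    unfolding c_def
    by (simp add: cinner_diff_left cinner_diff_right cinner_scaleC_left cinner_scaleC_right
        cinner_commute[of y x] ring_distribs mult_ac)
  also have "\<dots> = complex_of_real ((norm x)\<^sup>2 - (cmod c)\<^sup>2 / r)"
    using r_pos c_cnj
    by (simp add: k_def r_def cinner_self_eq_norm_square field_simps power2_eq_square)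
  finally have "(cmod c)\<^sup>2 / r \<le> (norm x)\<^sup>2"
    using cinner_self_Re_nonneg[of "x - k *\<^sub>C y"] by simp
  then have "(cmod c)\<^sup>2 \<le> (norm x * norm y)\<^sup>2"
    using r_pos by (simp add: divide_le_eq r_def power_mult_distrib)
  then show ?thesis
    unfolding c_def by (rule power2_le_imp_le) simp
qed

lemma buzano_inequality:
  fixes x y e :: "'a::complex_inner"
  assumes "norm e = 1"
  shows "2 * cmod (cinner x e * cinner e y) \<le> norm x * norm y + cmod (cinner x y)"
proof -
  define u where "u = (2 * cinner y e) *\<^sub>C e - y"
  have e_e: "cinner e e = 1"
    using cinner_self_eq_norm_square[of e] assms by simp
  have e_y: "cinner e y = cnj (cinner y e)"
    by (rule cinner_commute)
  have "cinner u u = cinner y y"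
    unfolding u_def
    by (simp add: cinner_diff_left cinner_diff_right cinner_scaleC_left cinner_scaleC_right e_e e_y)
  then have norm_u: "norm u = norm y"
    by (simp add: norm_eq_sqrt_cinner[of u] norm_eq_sqrt_cinner[of y])
  have x_u: "cinner x u = 2 * (cinner x e * cinner e y) - cinner x y"
    unfolding u_def by (simp add: cinner_diff_right cinner_scaleC_right e_y)
  have "cmod (2 * (cinner x e * cinner e y)) \<le> cmod (cinner x u) + cmod (cinner x y)"
    unfolding x_u using norm_triangle_sub[of "2 * (cinner x e * cinner e y)" "cinner x y"]
    by (simp add: add.commute)
  also have "\<dots> \<le> norm x * norm y + cmod (cinner x y)"
    using norm_cinner_le[of x u] norm_u by simp
  finally show ?thesis
    by (simp add: norm_mult)
qed

lemma square_le_interpolation: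
  fixes p a b \<alpha> :: real
  assumes "0 \<le> p" "2 * p \<le> a + b" "0 \<le> b" "b \<le> a" "0 \<le> \<alpha>"
  shows "p\<^sup>2 \<le> (1 + \<alpha>) / 4 * a\<^sup>2 + (1 - \<alpha>) / 4 * b\<^sup>2 + 1 / 2 * a * b"
proof -
  have "(2 * p)\<^sup>2 \<le> (a + b)\<^sup>2"
    using assms(1,2) by (intro power_mono) auto
  moreover have "0 \<le> \<alpha> * (a\<^sup>2 - b\<^sup>2)"
    using assms(3-5) by (intro mult_nonneg_nonneg) (auto intro: power_mono)
  ultimately show ?thesis
    by (simp add: power2_eq_square field_simps)
qed

theorem mainTheorem9:
  fixes x y e :: "'a::chilbert_space" and \<alpha> :: real
  assumes "norm e = 1" and "0 \<le> \<alpha>" and "\<alpha> \<le> 1"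
  shows "(cmod (cinner x e * cinner e y))\<^sup>2
    \<le> (1 + \<alpha>) / 4 * (norm x)\<^sup>2 * (norm y)\<^sup>2
     + (1 - \<alpha>) / 4 * (cmod (cinner x y))\<^sup>2
     + 1 / 2 * norm x * norm y * cmod (cinner x y)"
  using square_le_interpolation[OF norm_ge_zero buzano_inequality[OF assms(1)] norm_ge_zero
      norm_cinner_le assms(2)]
  by (simp add: power_mult_distrib mult.assoc)

end
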